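(* For $M\in\frac12\mathbb{Z}_{>0}$ and $s\in\frac12\mathbb{Z}$, $$2\tilde\Psi^{[M;s]}(2\tau,z_1,z_2,t)=\tilde\Psi^{[2M;2s]}\Big(\tau,\frac{z_1}2,\frac{z_2}2,\frac t2\Big)+e^{-2\pi is}\,\tilde\Psi^{[2M;2s]}\Big(\tau,\frac{z_1+1}2,\frac{z_2-1}2,\frac t2\Big).$$
   Context: Let $\operatorname{Im}\tau>0$, $q=e^{2\pi i\tau}$. For $m\in\frac12\mathbb{Z}_{>0}$, $s,j\in\frac12\mathbb{Z}$ define $\Phi^{+[m;s]}(\tau,z_1,z_2)=\sum_{n\in\mathbb{Z}}\frac{e^{2\pi imn(z_1+z_2)+2\pi isz_1}q^{mn^2+sn}}{1-e^{2\pi iz_1}q^n}$, $\Theta^+_{j,m}(\tau,z)=\sum_{n\in\mathbb{Z}}e^{2\pi imz(n+\frac j{2m})}q^{m(n+\frac j{2m})^2}$, $R^+_{j,m}(\tau,z)=\sum_{n\in\frac12\mathbb{Z},\,n\equiv j\bmod 2m}\{\operatorname{sign}(n-\frac12-j+2m)-E(\psi_{m,n}(\tau,z))\}e^{-\frac{\pi in^2}{2m}\tau+2\pi inz}$, with $E(x)=2\int_0^xe^{-\pi u^2}du$, $\psi_{m,n}(\tau,z)=(n-2m\frac{\operatorname{Im}z}{\operatorname{Im}\tau})\sqrt{\frac{\operatorname{Im}\tau}m}$; $\tilde\Phi^{+[m;s]}=\Phi^{+[m;s]}-\frac12\sum_{j\in s+\mathbb{Z},\,s\le j<s+2m}R^+_{j,m}(\tau,\frac{z_1-z_2}2)\Theta^+_{j,m}(\tau,z_1+z_2)$.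 Finally $\tilde\Psi^{[M;s]}(\tau,z_1,z_2,t)=e^{-2\pi iMt}\big(\tilde\Phi^{+[M;s]}(\tau,z_1,z_2)-\tilde\Phi^{+[M;s]}(\tau,-z_2,-z_1)\big)$. *)

theory Defs
  imports "HOL-Analysis.Analysis"
begin

text \<open>e(x) = exp(2 pi i x); q^r = e(tau r) for real r.\<close>
definition ee :: "complex \<Rightarrow> complex" where
  "ee x = exp (2 * complex_of_real pi * \<i> * x)"

definition Erf_E :: "real \<Rightarrow> real" where
  "Erf_E x = (if 0 \<le> x then 2 * integral {0..x} (\<lambda>u. exp (- pi * u\<^sup>2))
              else - 2 * integral {x..0} (\<lambda>u. exp (- pi * u\<^sup>2)))"

definition psi_mn :: "real \<Rightarrow> real \<Rightarrow> complex \<Rightarrow> complex \<Rightarrow> real" where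
  "psi_mn m n \<tau> z = (n - 2 * m * Im z / Im \<tau>) * sqrt (Im \<tau> / m)"

definition PhiPlus :: "real \<Rightarrow> real \<Rightarrow> complex \<Rightarrow> complex \<Rightarrow> complex \<Rightarrow> complex" where
  "PhiPlus m s \<tau> z1 z2 =
     (\<Sum>\<^sub>\<infinity>n\<in>(UNIV::int set).
        ee (of_real m * of_int n * (z1 + z2) + of_real s * z1)
        * ee (\<tau> * of_real (m * of_int n ^ 2 + s * of_int n))
        / (1 - ee z1 * ee (\<tau> * of_int n)))"

definition ThetaPlus :: "real \<Rightarrow> real \<Rightarrow> complex \<Rightarrow> complex \<Rightarrow> complex" where
  "ThetaPlus j m \<tau> z =
     (\<Sum>\<^sub>\<infinity>n\<in>(UNIV::int set).
        ee (of_real m * z * of_real (of_int n + j / (2 * m)))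
        * ee (\<tau> * of_real (m * (of_int n + j / (2 * m))\<^sup>2)))"

text \<open>Sum over n in (1/2)Z with n = j mod 2m, i.e. n in j + 2m Z.\<close>
definition RPlus :: "real \<Rightarrow> real \<Rightarrow> complex \<Rightarrow> complex \<Rightarrow> complex" where
  "RPlus j m \<tau> z =
     (\<Sum>\<^sub>\<infinity>n\<in>{n::real. \<exists>k::int. n = j + 2 * m * of_int k}.
        of_real (sgn (n - 1/2 - j + 2 * m) - Erf_E (psi_mn m n \<tau> z))
        * exp (- complex_of_real pi * \<i> * of_real (n\<^sup>2) * \<tau> / of_real (2 * m)
               + 2 * complex_of_real pi * \<i> * of_real n * z))"

definition PhiPlusTilde :: "real \<Rightarrow> real \<Rightarrow> complex \<Rightarrow> complex \<Rightarrow> complex \<Rightarrow> complex" where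
  "PhiPlusTilde m s \<tau> z1 z2 =
     PhiPlus m s \<tau> z1 z2
     - 1/2 * (\<Sum>j\<in>{j::real. (\<exists>k::int. j = s + of_int k) \<and> s \<le> j \<and> j < s + 2 * m}.
               RPlus j m \<tau> ((z1 - z2) / 2) * ThetaPlus j m \<tau> (z1 + z2))"

definition PsiTilde :: "real \<Rightarrow> real \<Rightarrow> complex \<Rightarrow> complex \<Rightarrow> complex \<Rightarrow> complex \<Rightarrow> complex" where
  "PsiTilde M s \<tau> z1 z2 t =
     exp (- 2 * complex_of_real pi * \<i> * of_real M * t)
     * (PhiPlusTilde M s \<tau> z1 z2 - PhiPlusTilde M s \<tau> (- z2) (- z1))"

end

(*
  With x = e(z1/2) q^n, the n-th term of Phi^{+[M;s]}(2 tau) has denominator 1 - x^2, and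
  2/(1 - x^2) = 1/(1 - x) + 1/(1 + x).  Replacing z1 by z1 + 1 flips the sign of x, so the two
  partial fractions are the n-th terms of Phi^{+[2M;2s]}(tau) at the two shifted arguments;
  splitting the series is legitimate because its terms decay like a Gaussian in n.
  For the correction, R and Theta with data (2M, 2j, tau) coincide with those with data
  (M, j, 2 tau) at doubled elliptic variable, while the shift of (z1 - z2)/2 by 1/2 multiplies
  R_{2s+l} by e((2s+l)/2); together with the factor e(-s) the odd l cancel and the even l give
  twice the original sum.  Antisymmetrizing under (z1, z2) -> (-z2, -z1) yields the identity
  for Psi.
*)

theory Submission
  imports Defs "HOL-Real_Asymp.Real_Asymp"
begin

lemma ee_add: "ee (x + y) = ee x * ee y"
  unfolding ee_def by (simp add: distrib_left exp_add)

lemma norm_ee: "norm (ee x) = exp (- 2 * pi * Im x)"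
  unfolding ee_def by (simp add: norm_exp_eq_Re)

lemma ee_of_int: "ee (of_int k) = 1"
  using exp_integer_2pi[of "of_int k"] unfolding ee_def by (simp add: algebra_simps)

lemma ee_half_of_nat: "ee (of_nat l / 2) = (-1) ^ l"
proof -
  have "ee (of_nat l / 2) = exp (of_nat l * (complex_of_real pi * \<i>))"
    unfolding ee_def by (simp add: algebra_simps)
  also have "\<dots> = (-1) ^ l"
    unfolding exp_of_nat_mult by simp
  finally show ?thesis .
qed

lemma summable_on_int_if_nat_tails:
  fixes f :: "int \<Rightarrow> 'a::banach"
  assumes "summable (\<lambda>k. norm (f (int k)))"
    and "summable (\<lambda>k. norm (f (- int (Suc k))))"
  shows "f summable_on UNIV"
proof -
  have "f summable_on range int"
    using norm_summable_imp_summable_on[OF assms(1)]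
    by (subst summable_on_reindex) (auto simp: inj_on_def o_def)
  moreover have "f summable_on range (\<lambda>k. - int (Suc k))"
    using norm_summable_imp_summable_on[OF assms(2)]
    by (subst summable_on_reindex) (auto simp: inj_on_def o_def)
  moreover have "range int \<union> range (\<lambda>k. - int (Suc k)) = UNIV"
  proof -
    have "n \<in> range int \<union> range (\<lambda>k. - int (Suc k))" for n :: int
    proof (cases "n \<ge> 0")
      case True
      then have "n = int (nat n)" by simp
      then show ?thesis by blast
    next
      case False
      then have "n = - int (Suc (nat (- n - 1)))" by simp
      then show ?thesis by blast
    qed
    then show ?thesis by blast
  qed
  moreover have "range int \<inter> range (\<lambda>k. - int (Suc k)) = {}"
    by auto
  ultimately show ?thesis
    by (metis summable_on_Un_disjoint)
qed

lemma summable_on_int_if_geometric_tails: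
  fixes f :: "int \<Rightarrow> 'a::banach" and C r :: real
  assumes r: "\<bar>r\<bar> < 1"
    and pos: "\<forall>\<^sub>F k in sequentially. norm (f (int k)) \<le> C * r ^ k"
    and neg: "\<forall>\<^sub>F k in sequentially. norm (f (- int (Suc k))) \<le> C * r ^ k"
  shows "f summable_on UNIV"
proof (rule summable_on_int_if_nat_tails)
  have geo: "summable (\<lambda>k. C * r ^ k)"
    using r by (intro summable_mult summable_geometric) auto
  show "summable (\<lambda>k. norm (f (int k)))"
    by (rule summable_comparison_test_ev[OF _ geo]) (use pos in simp)
  show "summable (\<lambda>k. norm (f (- int (Suc k))))"
    by (rule summable_comparison_test_ev[OF _ geo]) (use neg in simp)
qed

lemma exp_quadratic_le_geometric:
  fixes a b c :: real and n :: int
  assumes a: "a > 0"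
  shows "exp (- 2 * pi * (a * n\<^sup>2 + b * n + c))
       \<le> exp (- 2 * pi * c + pi * b\<^sup>2 / a) * exp (- pi * a) ^ nat \<bar>n\<bar>"
proof -
  have "\<bar>n\<bar> \<le> n\<^sup>2"
    by (cases "n = 0") (auto simp: power2_eq_square abs_mult[symmetric] intro: self_le_power[of "\<bar>n\<bar>" 2, simplified])
  then have "a * \<bar>real_of_int n\<bar> \<le> a * (real_of_int n)\<^sup>2"
    using a by (intro mult_left_mono) (simp_all flip: of_int_abs of_int_power)
  moreover have "0 \<le> a * (n + b / a)\<^sup>2"
    using a by simp
  moreover have "a * (n + b / a)\<^sup>2 = a * n\<^sup>2 + 2 * b * n + b\<^sup>2 / a"
    using a by (simp add: power2_eq_square field_simps)
  ultimately have "pi * (a * \<bar>real_of_int n\<bar> - b\<^sup>2 / a) \<le> pi * (2 * (a * n\<^sup>2 + b * n))"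
    by (intro mult_left_mono) auto
  then have "- 2 * pi * (a * n\<^sup>2 + b * n + c) \<le> - 2 * pi * c + pi * b\<^sup>2 / a + - pi * a * \<bar>real_of_int n\<bar>"
    by (simp add: algebra_simps)
  moreover have "exp (- pi * a) ^ nat \<bar>n\<bar> = exp (- pi * a * \<bar>real_of_int n\<bar>)"
    by (simp add: exp_of_nat_mult[symmetric] algebra_simps)
  ultimately show ?thesis
    by (simp flip: exp_add)
qed

lemma norm_one_minus_ee_ge_half_at_top:
  assumes "Im \<tau> > 0"
  shows "\<forall>\<^sub>F k in sequentially. norm (1 - ee w * ee (\<tau> * of_int (int k))) \<ge> 1/2"
proof -
  have "exp (- 2 * pi * Im w) > 0" by simp
  then have "\<forall>\<^sub>F k in sequentially. exp (- 2 * pi * Im w) * exp (- 2 * pi * Im \<tau> * real k) \<le> 1/2"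
    using assms by real_asymp
  then show ?thesis
  proof eventually_elim
    case (elim k)
    have "norm (ee w * ee (\<tau> * of_int (int k))) = exp (- 2 * pi * Im w) * exp (- 2 * pi * Im \<tau> * real k)"
      by (simp add: norm_mult norm_ee)
    with elim show ?case
      using norm_triangle_ineq2[of 1 "ee w * ee (\<tau> * of_int (int k))"] by simp
  qed
qed

lemma norm_one_minus_ee_ge_half_at_bot:
  assumes "Im \<tau> > 0"
  shows "\<forall>\<^sub>F k in sequentially. norm (1 - ee w * ee (\<tau> * of_int (- int (Suc k)))) \<ge> 1/2"
proof -
  have "exp (- 2 * pi * Im w) > 0" by simp
  then have "\<forall>\<^sub>F k in sequentially. exp (- 2 * pi * Im w) * exp (2 * pi * Im \<tau> * (real k + 1)) \<ge> 3/2"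
    using assms by real_asymp
  then show ?thesis
  proof eventually_elim
    case (elim k)
    have "norm (ee w * ee (\<tau> * of_int (- int (Suc k)))) = exp (- 2 * pi * Im w) * exp (2 * pi * Im \<tau> * (real k + 1))"
      by (simp add: norm_mult norm_ee algebra_simps)
    with elim show ?case
      using norm_triangle_ineq3[of "ee w * ee (\<tau> * of_int (- int (Suc k)))" 1] by (simp add: norm_minus_commute)
  qed
qed

definition phi_term :: "real \<Rightarrow> real \<Rightarrow> complex \<Rightarrow> complex \<Rightarrow> complex \<Rightarrow> int \<Rightarrow> complex" where
  "phi_term m s \<tau> z1 z2 n =
     ee (of_real m * of_int n * (z1 + z2) + of_real s * z1)
     * ee (\<tau> * of_real (m * of_int n ^ 2 + s * of_int n))
     / (1 - ee z1 * ee (\<tau> * of_int n))"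

lemma PhiPlus_eq_infsum_phi_term: "PhiPlus m s \<tau> z1 z2 = (\<Sum>\<^sub>\<infinity>n. phi_term m s \<tau> z1 z2 n)"
  unfolding PhiPlus_def phi_term_def ..

lemma summable_phi_term:
  assumes m: "m > 0" and \<tau>: "Im \<tau> > 0"
  shows "phi_term m s \<tau> z1 z2 summable_on UNIV"
proof -
  define a where "a = m * Im \<tau>"
  define K where "K = exp (- 2 * pi * (s * Im z1) + pi * (m * Im (z1 + z2) + s * Im \<tau>)\<^sup>2 / a)"
  define r where "r = exp (- pi * a)"
  have a: "a > 0" using m \<tau> by (simp add: a_def)
  have r: "0 \<le> r" "r < 1" using a by (auto simp: r_def)
  have numerator: "norm (ee (of_real m * of_int n * (z1 + z2) + of_real s * z1)
        * ee (\<tau> * of_real (m * of_int n ^ 2 + s * of_int n))) \<le> K * r ^ nat \<bar>n\<bar>" for n :: int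
  proof -
    have "norm (ee (of_real m * of_int n * (z1 + z2) + of_real s * z1)
          * ee (\<tau> * of_real (m * of_int n ^ 2 + s * of_int n)))
        = exp (- 2 * pi * (a * n\<^sup>2 + (m * Im (z1 + z2) + s * Im \<tau>) * n + s * Im z1))"
      by (simp add: a_def norm_mult norm_ee exp_add[symmetric] algebra_simps power2_eq_square)
    also have "\<dots> \<le> K * r ^ nat \<bar>n\<bar>"
      unfolding K_def r_def by (rule exp_quadratic_le_geometric[OF a])
    finally show ?thesis .
  qed
  have bound: "norm (phi_term m s \<tau> z1 z2 n) \<le> 2 * K * r ^ nat \<bar>n\<bar>"
    if "norm (1 - ee z1 * ee (\<tau> * of_int n)) \<ge> 1/2" for n :: int
  proof -
    have "norm (phi_term m s \<tau> z1 z2 n) \<le> K * r ^ nat \<bar>n\<bar> / (1/2)"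
      unfolding phi_term_def norm_divide
      by (rule frac_le) (use numerator that in \<open>auto simp: K_def r_def\<close>)
    then show ?thesis by simp
  qed
  show ?thesis
  proof (rule summable_on_int_if_geometric_tails)
    show "\<bar>r\<bar> < 1" using r by simp
    show "\<forall>\<^sub>F k in sequentially. norm (phi_term m s \<tau> z1 z2 (int k)) \<le> 2 * K * r ^ k"
      using norm_one_minus_ee_ge_half_at_top[OF \<tau>, of z1] by eventually_elim (use bound in fastforce)
    have "r ^ Suc k \<le> r ^ k" for k
      using r by (intro power_decreasing) auto
    then have decay: "2 * K * r ^ Suc k \<le> 2 * K * r ^ k" for k
      by (simp add: K_def)
    show "\<forall>\<^sub>F k in sequentially. norm (phi_term m s \<tau> z1 z2 (- int (Suc k))) \<le> 2 * K * r ^ k"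
      using norm_one_minus_ee_ge_half_at_bot[OF \<tau>, of z1]
    proof eventually_elim
      case (elim k)
      have "nat \<bar>- int (Suc k)\<bar> = Suc k" by simp
      with bound[of "- int (Suc k)", OF elim] show ?case
        using decay[of k] by simp
    qed
  qed
qed

lemma phi_term_duplication:
  assumes nz: "ee z1 * ee (2 * \<tau> * of_int n) \<noteq> 1"
  shows "2 * phi_term M s (2 * \<tau>) z1 z2 n
       = phi_term (2 * M) (2 * s) \<tau> (z1 / 2) (z2 / 2) n
         + ee (- of_real s) * phi_term (2 * M) (2 * s) \<tau> ((z1 + 1) / 2) ((z2 - 1) / 2) n"
proof -
  define x where "x = ee (z1 / 2) * ee (\<tau> * of_int n)"
  define N where "N = ee (of_real M * of_int n * (z1 + z2) + of_real s * z1)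
                    * ee (2 * \<tau> * of_real (M * of_int n ^ 2 + s * of_int n))"
  have xx: "ee z1 * ee (2 * \<tau> * of_int n) = x * x"
    unfolding x_def by (simp add: ee_add[symmetric] algebra_simps)
  then have x: "1 - x \<noteq> 0" "1 + x \<noteq> 0"
    using nz by (auto simp: add_eq_0_iff)
  have lhs: "phi_term M s (2 * \<tau>) z1 z2 n = N / ((1 - x) * (1 + x))"
    unfolding phi_term_def N_def xx by (simp add: algebra_simps)
  have first: "phi_term (2 * M) (2 * s) \<tau> (z1 / 2) (z2 / 2) n = N / (1 - x)"
    unfolding phi_term_def N_def x_def by (simp add: algebra_simps)
  have second: "ee (- of_real s) * phi_term (2 * M) (2 * s) \<tau> ((z1 + 1) / 2) ((z2 - 1) / 2) n
      = N / (1 + x)"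
  proof -
    have "ee (- of_real s) * ee (of_real (2 * M) * of_int n * ((z1 + 1) / 2 + (z2 - 1) / 2)
            + of_real (2 * s) * ((z1 + 1) / 2))
        = ee (of_real M * of_int n * (z1 + z2) + of_real s * z1)"
      unfolding ee_add[symmetric] by (rule arg_cong[where f=ee]) (simp add: field_simps)
    moreover have "ee (\<tau> * of_real (2 * M * of_int n ^ 2 + 2 * s * of_int n))
        = ee (2 * \<tau> * of_real (M * of_int n ^ 2 + s * of_int n))"
      by (rule arg_cong[where f=ee]) (simp add: algebra_simps)
    moreover have "ee ((z1 + 1) / 2) * ee (\<tau> * of_int n) = - x"
      unfolding x_def add_divide_distrib ee_add using ee_half_of_nat[of 1] by simp
    ultimately show ?thesis
      unfolding phi_term_def N_def by (simp add: mult.assoc)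
  qed
  have "2 * (N / ((1 - x) * (1 + x))) = N / (1 - x) + N / (1 + x)"
    using x by (simp add: field_simps)
  then show ?thesis
    unfolding lhs first second .
qed

lemma PhiPlus_duplication:
  assumes M: "M > 0" and \<tau>: "Im \<tau> > 0"
    and nz: "\<forall>n::int. ee z1 * ee (2 * \<tau> * of_int n) \<noteq> 1"
  shows "2 * PhiPlus M s (2 * \<tau>) z1 z2
       = PhiPlus (2 * M) (2 * s) \<tau> (z1 / 2) (z2 / 2)
         + ee (- of_real s) * PhiPlus (2 * M) (2 * s) \<tau> ((z1 + 1) / 2) ((z2 - 1) / 2)"
proof -
  have M2: "2 * M > 0" using M by simp
  have "2 * PhiPlus M s (2 * \<tau>) z1 z2
      = (\<Sum>\<^sub>\<infinity>n. phi_term (2 * M) (2 * s) \<tau> (z1 / 2) (z2 / 2) n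
           + ee (- of_real s) * phi_term (2 * M) (2 * s) \<tau> ((z1 + 1) / 2) ((z2 - 1) / 2) n)"
    unfolding PhiPlus_eq_infsum_phi_term infsum_cmult_right'[symmetric]
    using phi_term_duplication nz by simp
  also have "\<dots> = PhiPlus (2 * M) (2 * s) \<tau> (z1 / 2) (z2 / 2)
         + ee (- of_real s) * PhiPlus (2 * M) (2 * s) \<tau> ((z1 + 1) / 2) ((z2 - 1) / 2)"
    unfolding PhiPlus_eq_infsum_phi_term
    by (subst infsum_add)
       (auto intro: summable_phi_term[OF M2 \<tau>] summable_on_cmult_right simp: infsum_cmult_right')
  finally show ?thesis .
qed

lemma ThetaPlus_double:
  assumes "M \<noteq> 0"
  shows "ThetaPlus (2 * j) (2 * M) \<tau> \<zeta> = ThetaPlus j M (2 * \<tau>) (2 * \<zeta>)"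
proof -
  have "2 * j / (2 * (2 * M)) = j / (2 * M)" using assms by simp
  then show ?thesis
    unfolding ThetaPlus_def by (intro infsum_cong) (simp add: algebra_simps)
qed

lemma psi_mn_double:
  assumes "M > 0"
  shows "psi_mn (2 * M) (2 * n) \<tau> w = psi_mn M n (2 * \<tau>) (2 * w)"
proof -
  have "sqrt (2 * Im \<tau> / M) = sqrt (4 * (Im \<tau> / (2 * M)))"
    using assms by simp
  also have "\<dots> = 2 * sqrt (Im \<tau> / (2 * M))"
    by (simp only: real_sqrt_mult real_sqrt_four)
  finally show ?thesis
    unfolding psi_mn_def using assms by (simp add: field_simps)
qed

lemma sgn_double_minus_half:
  fixes y :: real
  assumes "y \<le> 0 \<or> 1 \<le> y"
  shows "sgn (2 * y - 1/2) = sgn (y - 1/2)"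
  using assms by (auto simp: sgn_if)

lemma RPlus_double:
  fixes M j :: real and \<tau> w :: complex
  assumes M: "M > 0" "2 * M \<ge> 1"
  shows "RPlus (2 * j) (2 * M) \<tau> w = RPlus j M (2 * \<tau>) (2 * w)"
proof -
  define A where "A = {n::real. \<exists>k::int. n = j + 2 * M * of_int k}"
  have image: "{n::real. \<exists>k::int. n = 2 * j + 2 * (2 * M) * of_int k} = (\<lambda>n. 2 * n) ` A"
  proof (intro set_eqI iffI)
    fix x assume "x \<in> {n::real. \<exists>k::int. n = 2 * j + 2 * (2 * M) * of_int k}"
    then obtain k :: int where "x = 2 * (j + 2 * M * k)"
      by (auto simp: algebra_simps)
    then show "x \<in> (\<lambda>n. 2 * n) ` A"
      unfolding A_def by blast
  qed (auto simp: A_def algebra_simps)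
  have sgn_eq: "sgn (2 * n - 1/2 - 2 * j + 2 * (2 * M)) = sgn (n - 1/2 - j + 2 * M)"
    if "n \<in> A" for n
  proof -
    obtain k :: int where n: "n = j + 2 * M * k"
      using \<open>n \<in> A\<close> unfolding A_def by blast
    have "2 * M * (k + 1) \<le> 0 \<or> 1 \<le> 2 * M * (k + 1)"
    proof (cases "k + 1 \<ge> 1")
      case True
      then have "1 * 1 \<le> 2 * M * real_of_int (k + 1)"
        using M by (intro mult_mono) linarith+
      then show ?thesis by simp
    next
      case False
      then show ?thesis
        using M by (simp add: mult_nonneg_nonpos)
    qed
    then show ?thesis
      using sgn_double_minus_half[of "2 * M * (k + 1)"] by (simp add: n algebra_simps)
  qed
  have exponent_eq:
    "- complex_of_real pi * \<i> * of_real ((2 * n)\<^sup>2) * \<tau> / of_real (2 * (2 * M))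
       + 2 * complex_of_real pi * \<i> * of_real (2 * n) * w
     = - complex_of_real pi * \<i> * of_real (n\<^sup>2) * (2 * \<tau>) / of_real (2 * M)
       + 2 * complex_of_real pi * \<i> * of_real n * (2 * w)" for n
    using M by (simp add: field_simps power2_eq_square)
  have inj: "inj_on (\<lambda>n::real. 2 * n) A" by (auto simp: inj_on_def)
  show ?thesis
    unfolding RPlus_def image infsum_reindex[OF inj] A_def[symmetric] o_def
    by (intro infsum_cong) (simp only: sgn_eq psi_mn_double[OF M(1)] exponent_eq)
qed

lemma RPlus_shift_half:
  assumes m: "m \<in> \<int>"
  shows "RPlus j m \<tau> (w + 1/2) = ee (of_real j / 2) * RPlus j m \<tau> w"
  unfolding RPlus_def infsum_cmult_right'[symmetric]
proof (intro infsum_cong)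
  fix n assume "n \<in> {n::real. \<exists>k::int. n = j + 2 * m * of_int k}"
  then obtain k :: int where n: "n = j + 2 * m * k" by blast
  obtain l :: int where l: "m = of_int l" using m Ints_cases by blast
  have "psi_mn m n \<tau> (w + 1/2) = psi_mn m n \<tau> w"
    unfolding psi_mn_def by simp
  moreover have "exp (- complex_of_real pi * \<i> * of_real (n\<^sup>2) * \<tau> / of_real (2 * m)
                      + 2 * complex_of_real pi * \<i> * of_real n * (w + 1/2))
      = ee (of_real j / 2) * ee (of_int (l * k))
        * exp (- complex_of_real pi * \<i> * of_real (n\<^sup>2) * \<tau> / of_real (2 * m)
               + 2 * complex_of_real pi * \<i> * of_real n * w)"
    unfolding ee_def exp_add[symmetric] by (rule arg_cong[where f=exp]) (simp add: n l algebra_simps)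
  ultimately show "complex_of_real (sgn (n - 1/2 - j + 2 * m) - Erf_E (psi_mn m n \<tau> (w + 1/2)))
         * exp (- complex_of_real pi * \<i> * of_real (n\<^sup>2) * \<tau> / of_real (2 * m)
                + 2 * complex_of_real pi * \<i> * of_real n * (w + 1/2))
       = ee (of_real j / 2)
         * (complex_of_real (sgn (n - 1/2 - j + 2 * m) - Erf_E (psi_mn m n \<tau> w))
            * exp (- complex_of_real pi * \<i> * of_real (n\<^sup>2) * \<tau> / of_real (2 * m)
                   + 2 * complex_of_real pi * \<i> * of_real n * w))"
    by (simp add: ee_of_int[of "l * k", unfolded of_int_mult])
qed

definition PhiPlus_correction :: "real \<Rightarrow> real \<Rightarrow> complex \<Rightarrow> complex \<Rightarrow> complex \<Rightarrow> complex" where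
  "PhiPlus_correction m s \<tau> z1 z2 =
     (\<Sum>j\<in>{j::real. (\<exists>k::int. j = s + of_int k) \<and> s \<le> j \<and> j < s + 2 * m}.
        RPlus j m \<tau> ((z1 - z2) / 2) * ThetaPlus j m \<tau> (z1 + z2))"

lemma PhiPlusTilde_eq_PhiPlus_minus_correction:
  "PhiPlusTilde m s \<tau> z1 z2 = PhiPlus m s \<tau> z1 z2 - 1/2 * PhiPlus_correction m s \<tau> z1 z2"
  unfolding PhiPlusTilde_def PhiPlus_correction_def ..

lemma shifted_integers_window_eq_image:
  fixes s m :: real and N :: nat
  assumes "2 * m = real N"
  shows "{j::real. (\<exists>k::int. j = s + of_int k) \<and> s \<le> j \<and> j < s + 2 * m} = (\<lambda>l. s + real l) ` {..<N}"
proof (intro set_eqI iffI)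
  fix j assume "j \<in> {j::real. (\<exists>k::int. j = s + of_int k) \<and> s \<le> j \<and> j < s + 2 * m}"
  then obtain k :: int where k: "j = s + k" "s \<le> j" "j < s + 2 * m" by blast
  then have "j = s + real (nat k)" "nat k < N"
    using assms by auto
  then show "j \<in> (\<lambda>l. s + real l) ` {..<N}" by blast
next
  fix j assume "j \<in> (\<lambda>l. s + real l) ` {..<N}"
  then obtain l where "l < N" "j = s + real l" by auto
  then show "j \<in> {j::real. (\<exists>k::int. j = s + of_int k) \<and> s \<le> j \<and> j < s + 2 * m}"
    using assms by (auto intro!: exI[of _ "int l"])
qed

lemma PhiPlus_correction_eq_sum_lessThan:
  assumes "2 * m = real N"
  shows "PhiPlus_correction m s \<tau> z1 z2
       = (\<Sum>l<N. RPlus (s + real l) m \<tau> ((z1 - z2) / 2) * ThetaPlus (s + real l) m \<tau> (z1 + z2))"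
  unfolding PhiPlus_correction_def shifted_integers_window_eq_image[OF assms]
  by (subst sum.reindex) (auto simp: inj_on_def)

lemma sum_lessThan_double_parity:
  fixes g :: "nat \<Rightarrow> 'a::comm_ring_1"
  shows "(\<Sum>l<2 * N. (1 + (-1) ^ l) * g l) = (\<Sum>l<N. 2 * g (2 * l))"
proof (induction N)
  case (Suc N)
  have "2 * Suc N = Suc (Suc (2 * N))" by simp
  then show ?case using Suc by simp
qed simp

lemma PhiPlus_correction_duplication:
  assumes M: "M > 0" and N: "2 * M = real N"
  shows "2 * PhiPlus_correction M s (2 * \<tau>) z1 z2
       = PhiPlus_correction (2 * M) (2 * s) \<tau> (z1 / 2) (z2 / 2)
         + ee (- of_real s) * PhiPlus_correction (2 * M) (2 * s) \<tau> ((z1 + 1) / 2) ((z2 - 1) / 2)"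
proof -
  define w where "w = (z1 / 2 - z2 / 2) / 2"
  define \<zeta> where "\<zeta> = z1 / 2 + z2 / 2"
  define g where "g l = RPlus (2 * s + real l) (2 * M) \<tau> w * ThetaPlus (2 * s + real l) (2 * M) \<tau> \<zeta>"
    for l :: nat
  have N2: "2 * (2 * M) = real (2 * N)" using N by simp
  have M_ge_half: "2 * M \<ge> 1" using M N by (cases N) auto
  have "2 * M \<in> \<int>" using N by simp
  have unshifted: "PhiPlus_correction (2 * M) (2 * s) \<tau> (z1 / 2) (z2 / 2) = (\<Sum>l<2 * N. g l)"
    unfolding PhiPlus_correction_eq_sum_lessThan[OF N2] g_def w_def \<zeta>_def ..
  have shifted_args: "((z1 + 1) / 2 - (z2 - 1) / 2) / 2 = w + 1/2" "(z1 + 1) / 2 + (z2 - 1) / 2 = \<zeta>"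
    unfolding w_def \<zeta>_def by (simp_all add: field_simps)
  have sign: "ee (- of_real s) * ee (of_real (2 * s + real l) / 2) = (-1) ^ l" for l
    unfolding ee_half_of_nat[symmetric] ee_add[symmetric] by (simp add: add_divide_distrib)
  have shifted: "ee (- of_real s) * PhiPlus_correction (2 * M) (2 * s) \<tau> ((z1 + 1) / 2) ((z2 - 1) / 2)
      = (\<Sum>l<2 * N. (-1) ^ l * g l)"
    unfolding PhiPlus_correction_eq_sum_lessThan[OF N2] shifted_args
      RPlus_shift_half[OF \<open>2 * M \<in> \<int>\<close>] sum_distrib_left
    by (intro sum.cong) (simp_all only: g_def sign mult.assoc[symmetric])
  have even: "g (2 * l) = RPlus (s + real l) M (2 * \<tau>) ((z1 - z2) / 2) * ThetaPlus (s + real l) M (2 * \<tau>) (z1 + z2)"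
    for l
  proof -
    have doubled_args: "2 * w = (z1 - z2) / 2" "2 * \<zeta> = z1 + z2"
      unfolding w_def \<zeta>_def by (simp_all add: field_simps)
    have "g (2 * l) = RPlus (2 * (s + real l)) (2 * M) \<tau> w * ThetaPlus (2 * (s + real l)) (2 * M) \<tau> \<zeta>"
      by (simp add: g_def)
    also have "\<dots> = RPlus (s + real l) M (2 * \<tau>) (2 * w) * ThetaPlus (s + real l) M (2 * \<tau>) (2 * \<zeta>)"
      using M by (simp only: RPlus_double[OF M M_ge_half] ThetaPlus_double)
    finally show ?thesis
      unfolding doubled_args .
  qed
  have "PhiPlus_correction (2 * M) (2 * s) \<tau> (z1 / 2) (z2 / 2)
      + ee (- of_real s) * PhiPlus_correction (2 * M) (2 * s) \<tau> ((z1 + 1) / 2) ((z2 - 1) / 2)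
      = (\<Sum>l<2 * N. (1 + (-1) ^ l) * g l)"
    unfolding unshifted shifted sum.distrib[symmetric] by (simp add: algebra_simps)
  also have "\<dots> = 2 * PhiPlus_correction M s (2 * \<tau>) z1 z2"
    unfolding sum_lessThan_double_parity PhiPlus_correction_eq_sum_lessThan[OF N] even sum_distrib_left ..
  finally show ?thesis ..
qed

lemma PhiPlusTilde_duplication:
  assumes M: "M > 0" and N: "2 * M = real N" and \<tau>: "Im \<tau> > 0"
    and nz: "\<forall>n::int. ee z1 * ee (2 * \<tau> * of_int n) \<noteq> 1"
  shows "2 * PhiPlusTilde M s (2 * \<tau>) z1 z2
       = PhiPlusTilde (2 * M) (2 * s) \<tau> (z1 / 2) (z2 / 2)
         + ee (- of_real s) * PhiPlusTilde (2 * M) (2 * s) \<tau> ((z1 + 1) / 2) ((z2 - 1) / 2)"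
  using PhiPlus_duplication[OF M \<tau> nz, of s z2] PhiPlus_correction_duplication[OF M N, of s \<tau> z1 z2]
  unfolding PhiPlusTilde_eq_PhiPlus_minus_correction by (simp add: algebra_simps)

theorem lemma6p19:
  fixes M s :: real and \<tau> z1 z2 t :: complex
  assumes "M > 0" and "2 * M \<in> \<int>" and "2 * s \<in> \<int>"
    and "Im \<tau> > 0"
    and "\<forall>n::int. ee z1 * ee (2 * \<tau> * of_int n) \<noteq> 1"
    and "\<forall>n::int. ee (- z2) * ee (2 * \<tau> * of_int n) \<noteq> 1"
  shows "2 * PsiTilde M s (2 * \<tau>) z1 z2 t
       = PsiTilde (2 * M) (2 * s) \<tau> (z1 / 2) (z2 / 2) (t / 2)
         + exp (- 2 * complex_of_real pi * \<i> * of_real s)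
           * PsiTilde (2 * M) (2 * s) \<tau> ((z1 + 1) / 2) ((z2 - 1) / 2) (t / 2)"
proof -
  obtain N :: nat where N: "2 * M = real N"
    using assms(1,2) by (metis Ints_cases of_int_0_le_iff of_nat_nat mult_pos_pos zero_less_numeral less_imp_le)
  define X where "X = exp (- 2 * complex_of_real pi * \<i> * of_real M * t)"
  have E: "exp (- 2 * complex_of_real pi * \<i> * of_real s) = ee (- of_real s)"
    unfolding ee_def by (simp add: algebra_simps)
  have X: "exp (- 2 * complex_of_real pi * \<i> * of_real (2 * M) * (t / 2)) = X"
    unfolding X_def by (simp add: field_simps)
  have args: "(- z2) / 2 = - (z2 / 2)" "(- z1) / 2 = - (z1 / 2)"
    "(- z2 + 1) / 2 = - ((z2 - 1) / 2)" "(- z1 - 1) / 2 = - ((z1 + 1) / 2)"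
    by (simp_all add: field_simps)
  note dup = PhiPlusTilde_duplication[OF assms(1) N assms(4) assms(5), of s z2]
    PhiPlusTilde_duplication[OF assms(1) N assms(4) assms(6), of s "- z1", unfolded args]
  have "2 * PsiTilde M s (2 * \<tau>) z1 z2 t
      = X * (2 * PhiPlusTilde M s (2 * \<tau>) z1 z2 - 2 * PhiPlusTilde M s (2 * \<tau>) (- z2) (- z1))"
    unfolding PsiTilde_def X_def by (simp add: algebra_simps)
  also have "\<dots> = PsiTilde (2 * M) (2 * s) \<tau> (z1 / 2) (z2 / 2) (t / 2)
      + ee (- of_real s) * PsiTilde (2 * M) (2 * s) \<tau> ((z1 + 1) / 2) ((z2 - 1) / 2) (t / 2)"
    unfolding dup PsiTilde_def X by (simp add: algebra_simps)
  finally show ?thesis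
    unfolding E .
qed

end
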